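(* Fix an instance of Problem (P) and the blockers $b(i)$ ($1\le i\le n$) determined by running Algorithm 1 on it. Consider the modified algorithm obtained from Algorithm 1 by initializing $y_i=\mathrm{avg}(i,b(i))$ for each $i$ (before the while loop) and deleting the step "$y_i\leftarrow\mathrm{avg}(i,i^* )$ for all $i_L<i<i^*$" (so the $y_i$ are never updated). Then the modified algorithm produces the same output $x_1,\dots,x_n$ as Algorithm 1 on this instance.
   Context: Problem (P): given an integer $n\ge1$, reals $0<q_1\le\cdots\le q_n$, $z_1,\dots,z_n>0$ and $K>0$, maximize $\sum_{i=1}^n x_i$ subject to $0\le x_i\le q_i$ for all $i$, $0\le x_1\le\cdots\le x_n$, and $\sum_{i=1}^n z_ix_i\le K$. For $1\le i<j\le n+1$ let $\mathrm{sum}(i,j)=z_i+\cdots+z_{j-1}$ and $\mathrm{avg}(i,j)=\mathrm{sum}(i,j)/(j-i)$. Algorithm 1: Initialize $S=\{0,n+1\}$, $y_i=\mathrm{avg}(i,n+1)$ and $x_i=0$ for $i=1,\dots,n$, and $\hat B=K$. While $\hat B>0$ and $S\ne\{0,1,\dots,n+1\}$, perform an iteration: let $i^*$ be the index $i\in\{1,\dots,n\}\setminus S$ minimizing $y_i$, ties broken in favour of the smallest index; let $i_L=\max\{j\in S:j<i^*\}$ and $i_R=\min\{j\in S:j>i^*\}$; set $d=\min\{\hat B/((i_R-i^* )y_{i^*}),\ q_{i^*}-x_{i^*}\}$; set $\hat B\leftarrow\hat B-d(i_R-i^* )y_{i^*}$; set $x_i\leftarrow x_i+d$ for all $i^*\le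 i<i_R$; set $y_i\leftarrow\mathrm{avg}(i,i^* )$ for all $i_L<i<i^*$; add $i^*$ to $S$. When the loop ends, output $x_1,\dots,x_n$. Blocker: for $1\le i\le n$, $b(i)$ is the value of $i^*$ in the last iteration of Algorithm 1 in which $y_i$ is updated (i.e. the last iteration with $i_L<i<i^*$); if $y_i$ is never updated, $b(i)=n+1$. *)

theory Defs
  imports Main "HOL.Real"
begin

text \<open>Indices 1..n; q, z are functions nat => real, only values at 1..n matter.
  sum(i,j) = z_i + ... + z_(j-1),  avg(i,j) = sum(i,j)/(j-i).\<close>

definition sumz :: "(nat \<Rightarrow> real) \<Rightarrow> nat \<Rightarrow> nat \<Rightarrow> real" where
  "sumz z i j = (\<Sum>k\<in>{i..<j}. z k)"

definition avg :: "(nat \<Rightarrow> real) \<Rightarrow> nat \<Rightarrow> nat \<Rightarrow> real" where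
  "avg z i j = sumz z i j / real (j - i)"

text \<open>State of Algorithm 1. The field blk records, for each i, the value of i*
  in the last iteration in which i_L < i < i* (initially n+1), i.e. the blocker.\<close>

record alg_state =
  Sset :: "nat set"
  yv :: "nat \<Rightarrow> real"
  xv :: "nat \<Rightarrow> real"
  Bh :: real
  blk :: "nat \<Rightarrow> nat"

text \<open>One iteration of the loop body. If upd is True, the step
  y_i := avg(i,i*) for i_L < i < i* is performed (Algorithm 1); if False it is
  deleted (modified algorithm).\<close>

definition iteration :: "bool \<Rightarrow> nat \<Rightarrow> (nat \<Rightarrow> real) \<Rightarrow> (nat \<Rightarrow> real) \<Rightarrow> alg_state \<Rightarrow> alg_state" where
  "iteration upd n q z st =
    (let U = {1..n} - Sset st;
         istar = (LEAST i. i \<in> U \<and> (\<forall>j\<in>U. yv st i \<le> yv st j));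
         iL = Max {j \<in> Sset st. j < istar};
         iR = Min {j \<in> Sset st. istar < j};
         d = min (Bh st / (real (iR - istar) * yv st istar)) (q istar - xv st istar)
     in st\<lparr> Sset := insert istar (Sset st),
            yv := (if upd then (\<lambda>i. if iL < i \<and> i < istar then avg z i istar else yv st i)
                   else yv st),
            xv := (\<lambda>i. if istar \<le> i \<and> i < iR then xv st i + d else xv st i),
            Bh := Bh st - d * real (iR - istar) * yv st istar,
            blk := (\<lambda>i. if iL < i \<and> i < istar then istar else blk st i) \<rparr>)"

definition loop_step :: "bool \<Rightarrow> nat \<Rightarrow> (nat \<Rightarrow> real) \<Rightarrow> (nat \<Rightarrow> real) \<Rightarrow> alg_state \<Rightarrow> alg_state" where
  "loop_step upd n q z st =
    (if 0 < Bh st \<and> Sset st \<noteq> {0..n+1} then iteration upd n q z st else st)"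

text \<open>Each iteration adds a new element of {1..n} to S, so the loop performs at most
  n iterations; iterating the guarded step n times therefore reaches the final state.\<close>

definition run :: "bool \<Rightarrow> nat \<Rightarrow> (nat \<Rightarrow> real) \<Rightarrow> (nat \<Rightarrow> real) \<Rightarrow> alg_state \<Rightarrow> alg_state" where
  "run upd n q z st0 = (loop_step upd n q z ^^ n) st0"

definition init1 :: "nat \<Rightarrow> (nat \<Rightarrow> real) \<Rightarrow> real \<Rightarrow> alg_state" where
  "init1 n z K = \<lparr> Sset = {0, n+1}, yv = (\<lambda>i. avg z i (n+1)), xv = (\<lambda>_. 0), Bh = K,
                   blk = (\<lambda>_. n+1) \<rparr>"

definition alg1 :: "nat \<Rightarrow> (nat \<Rightarrow> real) \<Rightarrow> (nat \<Rightarrow> real) \<Rightarrow> real \<Rightarrow> alg_state" where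
  "alg1 n q z K = run True n q z (init1 n z K)"

definition blocker :: "nat \<Rightarrow> (nat \<Rightarrow> real) \<Rightarrow> (nat \<Rightarrow> real) \<Rightarrow> real \<Rightarrow> nat \<Rightarrow> nat" where
  "blocker n q z K = blk (alg1 n q z K)"

definition alg_mod :: "nat \<Rightarrow> (nat \<Rightarrow> real) \<Rightarrow> (nat \<Rightarrow> real) \<Rightarrow> real \<Rightarrow> alg_state" where
  "alg_mod n q z K = run False n q z
     ((init1 n z K)\<lparr> yv := (\<lambda>i. avg z i (blocker n q z K i)) \<rparr>)"

end

theory Submission
  imports Defs
begin

text \<open>Along a run of Algorithm 1 each y_i only grows, and it is frozen once i enters S:
  when i* is chosen between its neighbours i_L < i* < i_R in S, every i in (i_L, i*) has
  blocker i_R, and y_i* = avg(i*, i_R) <= avg(i, i_R) = y_i forces avg(i, i*) >= avg(i, i_R).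
  Hence at every iteration the final values y_i = avg(i, b(i)) dominate the current ones and
  agree with them at i*, so i* is also the first minimiser of the final values outside S. As x
  and B are updated from S, i* and y_i* alone, both algorithms perform identical iterations.\<close>

lemma sumz_split:
  assumes "i \<le> p" "p \<le> r"
  shows "sumz z i r = sumz z i p + sumz z p r"
  unfolding sumz_def using assms by (simp add: sum.atLeastLessThan_concat)

lemma avg_split:
  assumes "i < p" "p < r"
  shows "real (r - i) * avg z i r = real (p - i) * avg z i p + real (r - p) * avg z p r"
proof -
  have "real (r - i) = real (p - i) + real (r - p)" using assms by simp
  then show ?thesis
    using assms sumz_split[of i p r z] by (simp add: avg_def)
qed

lemma avg_le_avg_prefix:
  assumes "i < p" "p < r" and suffix: "avg z p r \<le> avg z i r"
  shows "avg z i r \<le> avg z i p"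
proof -
  have "real (p - i) * avg z i p = real (r - i) * avg z i r - real (r - p) * avg z p r"
    using avg_split[OF assms(1,2), of z] by simp
  also have "\<dots> \<ge> real (r - i) * avg z i r - real (r - p) * avg z i r"
    using suffix by (simp add: mult_left_mono)
  also have "real (r - i) * avg z i r - real (r - p) * avg z i r = real (p - i) * avg z i r"
    using assms(1,2) by (simp add: algebra_simps of_nat_diff)
  finally show ?thesis using assms(1) by simp
qed

definition first_argmin :: "nat set \<Rightarrow> (nat \<Rightarrow> 'a::linorder) \<Rightarrow> nat" where
  "first_argmin U f = (LEAST i. i \<in> U \<and> (\<forall>j\<in>U. f i \<le> f j))"

lemma first_argmin:
  fixes f :: "nat \<Rightarrow> 'a::linorder"
  assumes "finite U" "U \<noteq> {}"
  shows first_argmin_in: "first_argmin U f \<in> U"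
    and first_argmin_le: "\<And>j. j \<in> U \<Longrightarrow> f (first_argmin U f) \<le> f j"
proof -
  have "Min (f ` U) \<in> f ` U" using assms by simp
  then obtain m where "m \<in> U" "f m = Min (f ` U)" by auto
  then have "m \<in> U \<and> (\<forall>j\<in>U. f m \<le> f j)" using assms(1) by simp
  then have "first_argmin U f \<in> U \<and> (\<forall>j\<in>U. f (first_argmin U f) \<le> f j)"
    unfolding first_argmin_def by (rule LeastI)
  then show "first_argmin U f \<in> U" "\<And>j. j \<in> U \<Longrightarrow> f (first_argmin U f) \<le> f j"
    by auto
qed

lemma first_argmin_less:
  fixes f :: "nat \<Rightarrow> 'a::linorder"
  assumes "finite U" "i \<in> U" "i < first_argmin U f"
  shows "f (first_argmin U f) < f i"
proof -
  have "\<not> (i \<in> U \<and> (\<forall>j\<in>U. f i \<le> f j))"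
    using assms(3) not_less_Least unfolding first_argmin_def by blast
  then obtain j where "j \<in> U" "f j < f i" using assms(2) by (auto simp: not_le)
  moreover have "f (first_argmin U f) \<le> f j"
    using first_argmin_le[OF assms(1) _ \<open>j \<in> U\<close>] \<open>j \<in> U\<close> by blast
  ultimately show ?thesis by (blast intro: le_less_trans)
qed

lemma first_argmin_eqI:
  fixes f :: "nat \<Rightarrow> 'a::linorder"
  assumes "p \<in> U" "\<And>j. j \<in> U \<Longrightarrow> f p \<le> f j" "\<And>i. i \<in> U \<Longrightarrow> i < p \<Longrightarrow> f p < f i"
  shows "first_argmin U f = p"
  unfolding first_argmin_def
proof (rule Least_equality)
  show "p \<in> U \<and> (\<forall>j\<in>U. f p \<le> f j)" using assms(1,2) by blast
next
  fix i assume i: "i \<in> U \<and> (\<forall>j\<in>U. f i \<le> f j)"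
  show "p \<le> i"
  proof (rule ccontr)
    assume "\<not> p \<le> i"
    then have "f p < f i" using assms(3) i by simp
    moreover have "f i \<le> f p" using i assms(1) by blast
    ultimately show False by simp
  qed
qed

lemma first_argmin_dominating:
  fixes f g :: "nat \<Rightarrow> 'a::linorder"
  assumes "finite U" "U \<noteq> {}" "\<And>j. j \<in> U \<Longrightarrow> f j \<le> g j"
    and "g (first_argmin U f) = f (first_argmin U f)"
  shows "first_argmin U g = first_argmin U f"
proof (rule first_argmin_eqI)
  let ?p = "first_argmin U f"
  show "?p \<in> U" using first_argmin_in[OF assms(1,2)] .
  show "g ?p \<le> g j" if "j \<in> U" for j
    using first_argmin_le[OF assms(1,2) that, where f=f] assms(3)[OF that] assms(4)
    by (metis order_trans)
  show "g ?p < g i" if "i \<in> U" "i < ?p" for i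
    using first_argmin_less[OF assms(1) that] assms(3)[OF that(1)] assms(4)
    by (metis less_le_trans)
qed

definition prev_in :: "nat set \<Rightarrow> nat \<Rightarrow> nat" where
  "prev_in S p = Max {j \<in> S. j < p}"

definition next_in :: "nat set \<Rightarrow> nat \<Rightarrow> nat" where
  "next_in S p = Min {j \<in> S. p < j}"

lemma prev_in:
  assumes "finite S" "k \<in> S" "k < p"
  shows prev_in_mem: "prev_in S p \<in> S"
    and prev_in_less: "prev_in S p < p"
    and le_prev_in: "\<And>j. j \<in> S \<Longrightarrow> j < p \<Longrightarrow> j \<le> prev_in S p"
proof -
  have fin: "finite {j \<in> S. j < p}" and ne: "{j \<in> S. j < p} \<noteq> {}"
    using assms by auto
  show "prev_in S p \<in> S" "prev_in S p < p"
    using Max_in[OF fin ne] unfolding prev_in_def by auto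
  show "j \<le> prev_in S p" if "j \<in> S" "j < p" for j
    using Max_ge[OF fin] that unfolding prev_in_def by simp
qed

lemma next_in:
  assumes "finite S" "k \<in> S" "p < k"
  shows next_in_mem: "next_in S p \<in> S"
    and next_in_greater: "p < next_in S p"
    and next_in_le: "\<And>j. j \<in> S \<Longrightarrow> p < j \<Longrightarrow> next_in S p \<le> j"
proof -
  have fin: "finite {j \<in> S. p < j}" and ne: "{j \<in> S. p < j} \<noteq> {}"
    using assms by auto
  show "next_in S p \<in> S" "p < next_in S p"
    using Min_in[OF fin ne] unfolding next_in_def by auto
  show "next_in S p \<le> j" if "j \<in> S" "p < j" for j
    using Min_le[OF fin] that unfolding next_in_def by simp
qed

lemma next_in_insert:
  assumes "finite S" "k \<in> S" "i < k"
  shows "next_in (insert p S) i = (if i < p then min p (next_in S i) else next_in S i)"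
proof -
  have "finite {j \<in> S. i < j}" "{j \<in> S. i < j} \<noteq> {}" using assms by auto
  moreover have "{j \<in> insert p S. i < j} =
      (if i < p then insert p {j \<in> S. i < j} else {j \<in> S. i < j})" by auto
  ultimately show ?thesis unfolding next_in_def by simp
qed

lemma next_in_gap:
  assumes "finite S" "k \<in> S" "k < p" "p \<notin> S" "prev_in S p < i" "i \<le> p"
  shows "next_in S i = next_in S p"
proof -
  have "i < j \<longleftrightarrow> p < j" if "j \<in> S" for j
  proof
    assume "i < j"
    show "p < j"
    proof (rule ccontr)
      assume "\<not> p < j"
      with \<open>j \<in> S\<close> assms(4) have "j < p" by (cases "j = p") auto
      then have "j \<le> prev_in S p" using le_prev_in[OF assms(1-3) \<open>j \<in> S\<close>] by simp
      with \<open>i < j\<close> assms(5) show False by simp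
    qed
  qed (use assms(6) in simp)
  then have "{j \<in> S. i < j} = {j \<in> S. p < j}" by blast
  then show ?thesis unfolding next_in_def by simp
qed

definition istar :: "nat \<Rightarrow> alg_state \<Rightarrow> nat" where
  "istar n st = first_argmin ({1..n} - Sset st) (yv st)"

lemma iteration_simps:
  "Sset (iteration upd n q z st) = insert (istar n st) (Sset st)"
  "yv (iteration upd n q z st) i =
     (if upd \<and> prev_in (Sset st) (istar n st) < i \<and> i < istar n st
      then avg z i (istar n st) else yv st i)"
  "blk (iteration upd n q z st) i =
     (if prev_in (Sset st) (istar n st) < i \<and> i < istar n st then istar n st else blk st i)"
  unfolding iteration_def istar_def first_argmin_def prev_in_def Let_def by simp_all

definition same_progress :: "alg_state \<Rightarrow> alg_state \<Rightarrow> bool" where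
  "same_progress ms st \<longleftrightarrow> Sset ms = Sset st \<and> xv ms = xv st \<and> Bh ms = Bh st"

lemma same_progress_iteration:
  assumes "same_progress ms st" "istar n ms = istar n st"
    "yv ms (istar n st) = yv st (istar n st)"
  shows "same_progress (iteration u n q z ms) (iteration v n q z st)"
proof -
  have eqs: "Sset ms = Sset st" "xv ms = xv st" "Bh ms = Bh st"
    using assms(1) unfolding same_progress_def by auto
  show ?thesis
    unfolding same_progress_def iteration_def Let_def
    unfolding first_argmin_def[symmetric] istar_def[symmetric]
    unfolding assms(2) assms(3) eqs by simp
qed

definition alg1_inv :: "nat \<Rightarrow> (nat \<Rightarrow> real) \<Rightarrow> alg_state \<Rightarrow> bool" where
  "alg1_inv n z st \<longleftrightarrow> 0 \<in> Sset st \<and> n + 1 \<in> Sset st \<and> Sset st \<subseteq> {0..n+1} \<and>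
     (\<forall>i. yv st i = avg z i (blk st i)) \<and>
     (\<forall>i\<in>{1..n} - Sset st. blk st i = next_in (Sset st) i)"

lemma alg1_inv_init1: "alg1_inv n z (init1 n z K)"
proof -
  have "next_in {0, n + 1} i = n + 1" if "i \<le> n" for i
    using next_in_mem[of "{0, n + 1}" "n + 1" i] next_in_greater[of "{0, n + 1}" "n + 1" i] that
    by auto
  then show ?thesis unfolding alg1_inv_def init1_def by auto
qed

context
  fixes n :: nat and z :: "nat \<Rightarrow> real" and st :: alg_state
  assumes inv: "alg1_inv n z st" and unfinished: "Sset st \<noteq> {0..n+1}"
begin

lemma unsettled_nonempty: "{1..n} - Sset st \<noteq> {}"
proof
  assume none: "{1..n} - Sset st = {}"
  have "x \<in> Sset st" if x: "x \<in> {0..n+1}" for x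
  proof (cases "x = 0 \<or> x = n + 1")
    case True
    then show ?thesis using inv unfolding alg1_inv_def by blast
  next
    case False
    then have "x \<in> {1..n}" using x by simp
    then show ?thesis using none by blast
  qed
  then have "Sset st = {0..n+1}" using inv unfolding alg1_inv_def by blast
  with unfinished show False by contradiction
qed

lemma finite_Sset: "finite (Sset st)"
proof (rule finite_subset)
  show "Sset st \<subseteq> {0..n+1}" using inv unfolding alg1_inv_def by blast
qed simp

lemma istar_unsettled: "istar n st \<in> {1..n} - Sset st"
  unfolding istar_def using first_argmin_in[OF _ unsettled_nonempty] by simp

lemma istar_le: "j \<in> {1..n} - Sset st \<Longrightarrow> yv st (istar n st) \<le> yv st j"
  unfolding istar_def using first_argmin_le[OF _ unsettled_nonempty] by simp

lemma gap_unsettled: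
  assumes "prev_in (Sset st) (istar n st) < i" "i < istar n st"
  shows "i \<in> {1..n} - Sset st" and "blk st i = next_in (Sset st) (istar n st)"
proof -
  let ?S = "Sset st" and ?p = "istar n st"
  have p: "?p \<in> {1..n} - ?S" by (rule istar_unsettled)
  have "0 \<in> ?S" using inv unfolding alg1_inv_def by simp
  have "0 < ?p" using p by simp
  have "i \<notin> ?S"
  proof
    assume "i \<in> ?S"
    then have "i \<le> prev_in ?S ?p"
      using le_prev_in[OF finite_Sset \<open>0 \<in> ?S\<close> \<open>0 < ?p\<close>] assms(2) by blast
    with assms(1) show False by simp
  qed
  moreover have "1 \<le> i" "i \<le> n" using assms p by auto
  ultimately show iU: "i \<in> {1..n} - ?S" by simp
  have "blk st i = next_in ?S i" using inv iU unfolding alg1_inv_def by blast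
  also have "\<dots> = next_in ?S ?p"
  proof (rule next_in_gap[OF finite_Sset \<open>0 \<in> ?S\<close> \<open>0 < ?p\<close>])
    show "?p \<notin> ?S" using p by simp
  qed (use assms in simp_all)
  finally show "blk st i = next_in ?S ?p" .
qed

lemma yv_iteration_True_ge: "yv st i \<le> yv (iteration True n q z st) i"
proof (cases "prev_in (Sset st) (istar n st) < i \<and> i < istar n st")
  case True
  let ?S = "Sset st" and ?p = "istar n st"
  let ?r = "next_in ?S ?p"
  have "n + 1 \<in> ?S" using inv unfolding alg1_inv_def by simp
  then have "?p < ?r" using next_in_greater[OF finite_Sset] istar_unsettled by simp
  have yp: "yv st ?p = avg z ?p ?r"
    using inv istar_unsettled unfolding alg1_inv_def by simp
  have gap: "i \<in> {1..n} - ?S" "blk st i = ?r"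
    using gap_unsettled True by auto
  have yi: "yv st i = avg z i ?r"
    using inv gap unfolding alg1_inv_def by simp
  have "avg z ?p ?r \<le> avg z i ?r"
    using istar_le[OF gap(1)] yp yi by simp
  then have "avg z i ?r \<le> avg z i ?p"
    using avg_le_avg_prefix True \<open>?p < ?r\<close> by blast
  then show ?thesis using True yi by (simp add: iteration_simps)
qed (auto simp: iteration_simps)

lemma yv_iteration_True_settled:
  "i \<in> insert (istar n st) (Sset st) \<Longrightarrow> yv (iteration True n q z st) i = yv st i"
  using gap_unsettled(1) by (auto simp: iteration_simps)

lemma blk_iteration_unsettled:
  assumes i: "i \<in> {1..n} - insert (istar n st) (Sset st)"
  shows "blk (iteration upd n q z st) i = next_in (insert (istar n st) (Sset st)) i"
proof -
  let ?S = "Sset st" and ?p = "istar n st"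
  have S: "0 \<in> ?S" "n + 1 \<in> ?S" using inv unfolding alg1_inv_def by auto
  have p: "?p \<in> {1..n} - ?S" by (rule istar_unsettled)
  then have "0 < ?p" by simp
  have blk: "blk st i = next_in ?S i" using inv i unfolding alg1_inv_def by simp
  have "i < n + 1" using i by simp
  have ins: "next_in (insert ?p ?S) i = (if i < ?p then min ?p (next_in ?S i) else next_in ?S i)"
    by (rule next_in_insert[OF finite_Sset \<open>n + 1 \<in> ?S\<close> \<open>i < n + 1\<close>])
  show ?thesis
  proof (cases "prev_in ?S ?p < i \<and> i < ?p")
    case gap: True
    have "next_in ?S i = next_in ?S ?p" using gap_unsettled(2) gap blk by simp
    moreover have "?p < next_in ?S ?p"
      using next_in_greater[OF finite_Sset \<open>n + 1 \<in> ?S\<close>] p by simp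
    ultimately show ?thesis using gap ins by (simp add: iteration_simps)
  next
    case no_gap: False
    show ?thesis
    proof (cases "i < ?p")
      case True
      have prev: "prev_in ?S ?p \<in> ?S" "prev_in ?S ?p < ?p"
        using prev_in_mem[OF finite_Sset \<open>0 \<in> ?S\<close> \<open>0 < ?p\<close>]
          prev_in_less[OF finite_Sset \<open>0 \<in> ?S\<close> \<open>0 < ?p\<close>] .
      have "i \<noteq> prev_in ?S ?p" using prev(1) i by blast
      with no_gap True have "i < prev_in ?S ?p" by simp
      then have "next_in ?S i \<le> prev_in ?S ?p"
        by (rule next_in_le[OF finite_Sset \<open>n + 1 \<in> ?S\<close> \<open>i < n + 1\<close> prev(1)])
      with prev(2) have "next_in ?S i < ?p" by simp
      then show ?thesis using no_gap True ins blk by (simp add: iteration_simps)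
    next
      case False
      then show ?thesis using no_gap ins blk by (simp add: iteration_simps)
    qed
  qed
qed

lemma alg1_inv_iteration: "alg1_inv n z (iteration True n q z st)"
proof -
  let ?st' = "iteration True n q z st"
  have "yv ?st' i = avg z i (blk ?st' i)" for i
    using inv unfolding alg1_inv_def by (simp add: iteration_simps)
  moreover have "Sset ?st' = insert (istar n st) (Sset st)" by (simp add: iteration_simps)
  ultimately show ?thesis
    using inv istar_unsettled blk_iteration_unsettled unfolding alg1_inv_def by auto
qed

end

lemma alg1_inv_loop_step: "alg1_inv n z st \<Longrightarrow> alg1_inv n z (loop_step True n q z st)"
  unfolding loop_step_def by (simp add: alg1_inv_iteration)

lemma alg1_inv_funpow: "alg1_inv n z st \<Longrightarrow> alg1_inv n z ((loop_step True n q z ^^ k) st)"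
  by (induction k) (simp_all add: alg1_inv_loop_step)

lemma yv_loop_step_True_ge: "alg1_inv n z st \<Longrightarrow> yv st i \<le> yv (loop_step True n q z st) i"
  unfolding loop_step_def by (simp add: yv_iteration_True_ge)

lemma loop_step_True_settled:
  assumes "alg1_inv n z st" "i \<in> Sset st"
  shows "i \<in> Sset (loop_step True n q z st) \<and> yv (loop_step True n q z st) i = yv st i"
  using assms yv_iteration_True_settled by (simp add: loop_step_def iteration_simps)

lemma yv_alg1_mono:
  assumes "alg1_inv n z st" "k \<le> m"
  shows "yv ((loop_step True n q z ^^ k) st) i \<le> yv ((loop_step True n q z ^^ m) st) i"
proof (rule lift_Suc_mono_le[OF _ assms(2)])
  fix k
  show "yv ((loop_step True n q z ^^ k) st) i \<le> yv ((loop_step True n q z ^^ Suc k) st) i"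
    using yv_loop_step_True_ge[OF alg1_inv_funpow[OF assms(1)]] by simp
qed

lemma yv_alg1_settled:
  assumes "alg1_inv n z st" "k \<le> m" "i \<in> Sset ((loop_step True n q z ^^ k) st)"
  shows "yv ((loop_step True n q z ^^ m) st) i = yv ((loop_step True n q z ^^ k) st) i"
proof -
  have "i \<in> Sset ((loop_step True n q z ^^ m) st) \<and>
      yv ((loop_step True n q z ^^ m) st) i = yv ((loop_step True n q z ^^ k) st) i"
    using assms(2)
  proof (induction m rule: dec_induct)
    case base
    then show ?case using assms(3) by simp
  next
    case (step m)
    then show ?case
      using loop_step_True_settled[OF alg1_inv_funpow[OF assms(1), where q=q and k=m]] by simp
  qed
  then show ?thesis by simp
qed

lemma yv_final_istar:
  assumes "alg1_inv n z st0" "Suc k \<le> N"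
    and st: "st = (loop_step True n q z ^^ k) st0"
    and guard: "0 < Bh st" "Sset st \<noteq> {0..n+1}"
  shows "yv ((loop_step True n q z ^^ N) st0) (istar n st) = yv st (istar n st)"
proof -
  have inv: "alg1_inv n z st" using alg1_inv_funpow[OF assms(1)] st by simp
  have step: "(loop_step True n q z ^^ Suc k) st0 = iteration True n q z st"
    using guard st by (simp add: loop_step_def)
  then have "istar n st \<in> Sset ((loop_step True n q z ^^ Suc k) st0)"
    by (simp add: iteration_simps)
  then have "yv ((loop_step True n q z ^^ N) st0) (istar n st) =
      yv (iteration True n q z st) (istar n st)"
    using yv_alg1_settled[OF assms(1,2)] step by simp
  also have "\<dots> = yv st (istar n st)"
    using yv_iteration_True_settled[OF inv guard(2)] by simp
  finally show ?thesis .
qed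

lemma istar_final_yv:
  assumes "alg1_inv n z st0" "Suc k \<le> N"
    and st: "st = (loop_step True n q z ^^ k) st0"
    and guard: "0 < Bh st" "Sset st \<noteq> {0..n+1}"
  shows "first_argmin ({1..n} - Sset st) (yv ((loop_step True n q z ^^ N) st0)) = istar n st"
  unfolding istar_def
proof (rule first_argmin_dominating)
  have inv: "alg1_inv n z st" using alg1_inv_funpow[OF assms(1)] st by simp
  show "finite ({1..n} - Sset st)" by simp
  show "{1..n} - Sset st \<noteq> {}" using unsettled_nonempty[OF inv guard(2)] .
  show "yv st j \<le> yv ((loop_step True n q z ^^ N) st0) j" for j
    using yv_alg1_mono[OF assms(1)] assms(2) st by simp
  show "yv ((loop_step True n q z ^^ N) st0) (first_argmin ({1..n} - Sset st) (yv st)) =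
      yv st (first_argmin ({1..n} - Sset st) (yv st))"
    using yv_final_istar[OF assms] unfolding istar_def .
qed

lemma yv_loop_False: "yv ((loop_step False n q z ^^ k) ms) = yv ms"
  by (induction k) (simp_all add: loop_step_def iteration_simps)

lemma loop_False_same_progress:
  assumes "alg1_inv n z st0" "same_progress ms0 st0"
    and y0: "yv ms0 = yv ((loop_step True n q z ^^ N) st0)" and "k \<le> N"
  shows "same_progress ((loop_step False n q z ^^ k) ms0) ((loop_step True n q z ^^ k) st0)"
  using assms(4)
proof (induction k)
  case 0
  then show ?case using assms(2) by simp
next
  case (Suc k)
  define st where "st = (loop_step True n q z ^^ k) st0"
  define ms where "ms = (loop_step False n q z ^^ k) ms0"
  have prog: "same_progress ms st" using Suc unfolding st_def ms_def by simp
  then have eqs: "Sset ms = Sset st" "Bh ms = Bh st" unfolding same_progress_def by auto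
  have yms: "yv ms = yv ((loop_step True n q z ^^ N) st0)"
    unfolding ms_def yv_loop_False y0 ..
  have "(loop_step True n q z ^^ Suc k) st0 = loop_step True n q z st"
    "(loop_step False n q z ^^ Suc k) ms0 = loop_step False n q z ms"
    unfolding st_def ms_def by simp_all
  moreover have "same_progress (loop_step False n q z ms) (loop_step True n q z st)"
  proof (cases "0 < Bh st \<and> Sset st \<noteq> {0..n+1}")
    case True
    then have "istar n ms = istar n st"
      using istar_final_yv[OF assms(1) Suc.prems st_def] unfolding istar_def yms eqs by simp
    moreover have "yv ms (istar n st) = yv st (istar n st)"
      using yv_final_istar[OF assms(1) Suc.prems st_def] True unfolding yms by simp
    ultimately have "same_progress (iteration False n q z ms) (iteration True n q z st)"
      by (rule same_progress_iteration[OF prog])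
    then show ?thesis using True eqs by (simp add: loop_step_def)
  next
    case False
    then show ?thesis using prog eqs by (auto simp: loop_step_def)
  qed
  ultimately show ?case by simp
qed

theorem lemma6:
  fixes n :: nat and q z :: "nat \<Rightarrow> real" and K :: real
  assumes "1 \<le> n"
    and "0 < q 1"
    and "\<And>i. 1 \<le> i \<Longrightarrow> i < n \<Longrightarrow> q i \<le> q (Suc i)"
    and "\<And>i. 1 \<le> i \<Longrightarrow> i \<le> n \<Longrightarrow> 0 < z i"
    and "0 < K"
  shows "\<forall>i\<in>{1..n}. xv (alg_mod n q z K) i = xv (alg1 n q z K) i"
proof -
  let ?st0 = "init1 n z K"
  let ?ms0 = "?st0\<lparr>yv := (\<lambda>i. avg z i (blocker n q z K i))\<rparr>"
  have inv: "alg1_inv n z ?st0" by (rule alg1_inv_init1)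
  have alg1: "alg1 n q z K = (loop_step True n q z ^^ n) ?st0"
    unfolding alg1_def run_def ..
  have "yv ?ms0 = yv (alg1 n q z K)"
    using alg1_inv_funpow[OF inv, where q=q and k=n] unfolding alg1 blocker_def alg1_inv_def by auto
  then have "same_progress ((loop_step False n q z ^^ n) ?ms0) (alg1 n q z K)"
    using loop_False_same_progress[OF inv _ _ order_refl] unfolding alg1
    by (simp add: same_progress_def)
  then show ?thesis
    unfolding alg_mod_def run_def same_progress_def by simp
qed

end
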